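(* For every $q\in(0,\log(\frac{1+\sqrt5}{2}))$ there exist continuum many (i.e. a set of cardinality of the continuum of) distinct $S$-gap shifts which have the specification property and entropy $q$.
   Context: For a nonempty set $S\subseteq\{0,1,2,\dots\}$, the $S$-gap shift $X(S)\subseteq\{0,1\}^{\mathbb{Z}}$ is the set of bi-infinite binary sequences in which the number of consecutive zeros between ones is always an element of $S$. The entropy of a shift $X$ is $h(X)=\lim_n\frac1n\log|\mathcal{B}_n(X)|$, where $\mathcal{B}_n(X)$ is the set of words of length $n$ occurring in points of $X$ and $\log$ is to base $2$. $X$ has the specification property if there is $N\ge1$ such that for all $u,v\in\mathcal{B}(X)=\bigcup_n\mathcal{B}_n(X)$ there exists $w\in\mathcal{B}_N(X)$ with $uwv\in\mathcal{B}(X)$. *)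

theory Defs
  imports Complex_Main "HOL-Library.Equipollence"
begin

text \<open>Binary symbols are encoded as bool: True = 1, False = 0.
  A point of the full shift is a map int \<Rightarrow> bool.\<close>

definition gap_shift :: "nat set \<Rightarrow> (int \<Rightarrow> bool) set" where
  "gap_shift S = {x. \<forall>i j. i < j \<and> x i \<and> x j \<and> (\<forall>k. i < k \<and> k < j \<longrightarrow> \<not> x k)
                        \<longrightarrow> nat (j - i - 1) \<in> S}"

definition occurs_in :: "bool list \<Rightarrow> (int \<Rightarrow> bool) \<Rightarrow> bool" where
  "occurs_in w x \<longleftrightarrow> (\<exists>i. \<forall>k < length w. w ! k = x (i + int k))"

definition words_n :: "(int \<Rightarrow> bool) set \<Rightarrow> nat \<Rightarrow> bool list set" where
  "words_n X n = {w. length w = n \<and> (\<exists>x\<in>X. occurs_in w x)}"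

definition words :: "(int \<Rightarrow> bool) set \<Rightarrow> bool list set" where
  "words X = (\<Union>n. words_n X n)"

definition entropy :: "(int \<Rightarrow> bool) set \<Rightarrow> real" where
  "entropy X = lim (\<lambda>n. log 2 (real (card (words_n X n))) / real n)"

definition has_specification :: "(int \<Rightarrow> bool) set \<Rightarrow> bool" where
  "has_specification X \<longleftrightarrow>
     (\<exists>N\<ge>1. \<forall>u\<in>words X. \<forall>v\<in>words X. \<exists>w\<in>words_n X N. u @ w @ v \<in> words X)"

end

theory Submission
  imports Defs "HOL-Analysis.Analysis"
begin

(* For 0 < r < 1 call the sum of r^(s+1) over s in S the weight of S. If S has weight 1, the gap
   shift X(S) has entropy -log r: the words beginning and ending with 1 obey a renewal equation
   whose kernel has total weight 1, so their number grows like r^-m. If S contains an arithmetic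
   progression M + D j with D dividing M, then X(S) has specification, since any two words can be
   bridged using gaps from the progression.
   For r = 2^-q the condition q < log golden ratio means r^2 + r > 1. This makes the numbers that
   are not multiples of K beyond M so heavy, in total and in every tail, that a greedy choice among
   them completes any set of such multiples to a set of weight 1. Keeping all even multiples and
   encoding an arbitrary set of naturals in the odd ones gives continuum many distinct S. *)

section \<open>Words of gap shifts\<close>

definition gap_word :: "nat set \<Rightarrow> bool list \<Rightarrow> bool" where
  "gap_word S w \<longleftrightarrow>
     (\<forall>i j. i < j \<and> j < length w \<and> w!i \<and> w!j \<and> (\<forall>k. i < k \<and> k < j \<longrightarrow> \<not> w!k) \<longrightarrow> j - i - 1 \<in> S)"

lemma gap_wordI:
  assumes "\<And>i j. i < j \<Longrightarrow> j < length w \<Longrightarrow> w!i \<Longrightarrow> w!j \<Longrightarrow> (\<And>k. i < k \<Longrightarrow> k < j \<Longrightarrow> \<not> w!k)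
             \<Longrightarrow> j - i - 1 \<in> S"
  shows "gap_word S w"
  using assms unfolding gap_word_def by blast

lemma gap_wordD:
  assumes "gap_word S w" "i < j" "j < length w" "w!i" "w!j" "\<And>k. i < k \<Longrightarrow> k < j \<Longrightarrow> \<not> w!k"
  shows "j - i - 1 \<in> S"
  using assms unfolding gap_word_def by blast

lemma words_n_gap_shift: "words_n (gap_shift S) n = {w. length w = n \<and> gap_word S w}"
proof (intro set_eqI iffI)
  fix w assume "w \<in> words_n (gap_shift S) n"
  then obtain x i where x: "x \<in> gap_shift S" and len: "length w = n"
    and occ: "\<And>k. k < length w \<Longrightarrow> w ! k = x (i + int k)"
    unfolding words_n_def occurs_in_def by blast
  have "gap_word S w"
  proof (rule gap_wordI)
    fix a b assume ab: "a < b" "b < length w" "w!a" "w!b" and gap: "\<And>k. a < k \<Longrightarrow> k < b \<Longrightarrow> \<not> w!k"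
    have "\<not> x k" if "i + int a < k" "k < i + int b" for k
      using gap[of "nat (k - i)"] occ[of "nat (k - i)"] that ab by auto
    moreover have "x (i + int a)" "x (i + int b)" using ab occ by auto
    ultimately have "nat ((i + int b) - (i + int a) - 1) \<in> S"
      using ab by (intro x[unfolded gap_shift_def, THEN CollectD, rule_format]) auto
    moreover have "nat ((i + int b) - (i + int a) - 1) = b - a - 1" using ab by auto
    ultimately show "b - a - 1 \<in> S" by simp
  qed
  thus "w \<in> {w. length w = n \<and> gap_word S w}" using len by simp
next
  fix w assume "w \<in> {w. length w = n \<and> gap_word S w}"
  hence len: "length w = n" and g: "gap_word S w" by auto
  define x where "x = (\<lambda>k::int. 0 \<le> k \<and> k < int n \<and> w ! nat k)"
  have "x \<in> gap_shift S" unfolding gap_shift_def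
  proof (intro CollectI allI impI)
    fix i j assume h: "i < j \<and> x i \<and> x j \<and> (\<forall>k. i < k \<and> k < j \<longrightarrow> \<not> x k)"
    have "nat j - nat i - 1 \<in> S"
    proof (rule gap_wordD[OF g])
      fix k assume k: "nat i < k" "k < nat j"
      have "i < int k" "int k < j" using k h by (auto simp: x_def)
      hence "\<not> x (int k)" using h by blast
      thus "\<not> w ! k" using k h len by (auto simp: x_def)
    qed (use h len in \<open>auto simp: x_def\<close>)
    moreover have "nat (j - i - 1) = nat j - nat i - 1" using h by (auto simp: x_def)
    ultimately show "nat (j - i - 1) \<in> S" by simp
  qed
  moreover have "occurs_in w x"
    unfolding occurs_in_def using len by (auto simp: x_def intro!: exI[of _ 0])
  ultimately show "w \<in> words_n (gap_shift S) n" unfolding words_n_def using len by auto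
qed

lemma words_gap_shift: "words (gap_shift S) = Collect (gap_word S)"
  unfolding words_def words_n_gap_shift by auto

lemma finite_words_n: "finite (words_n X n)"
proof (rule finite_subset)
  show "words_n X n \<subseteq> {w. set w \<subseteq> UNIV \<and> length w = n}" by (auto simp: words_n_def)
qed (rule finite_lists_length_eq, simp)

lemma gap_word_prefix:
  assumes "gap_word S (xs @ ys)" shows "gap_word S xs"
proof (rule gap_wordI)
  fix i j assume h: "i < j" "j < length xs" "xs!i" "xs!j" and gap: "\<And>k. i < k \<Longrightarrow> k < j \<Longrightarrow> \<not> xs!k"
  show "j - i - 1 \<in> S"
    by (rule gap_wordD[OF assms]) (use h gap in \<open>auto simp: nth_append\<close>)
qed

lemma gap_word_suffix:
  assumes "gap_word S (xs @ ys)" shows "gap_word S ys"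
proof (rule gap_wordI)
  fix i j assume h: "i < j" "j < length ys" "ys!i" "ys!j" and gap: "\<And>k. i < k \<Longrightarrow> k < j \<Longrightarrow> \<not> ys!k"
  have "(j + length xs) - (i + length xs) - 1 \<in> S"
  proof (rule gap_wordD[OF assms])
    fix k assume "i + length xs < k" "k < j + length xs"
    thus "\<not> (xs @ ys) ! k" using gap[of "k - length xs"] by (auto simp: nth_append)
  qed (use h in \<open>auto simp: nth_append\<close>)
  thus "j - i - 1 \<in> S" by simp
qed

lemma gap_word_zeros_append:
  assumes "True \<notin> set xs" "gap_word S ys" shows "gap_word S (xs @ ys)"
proof (rule gap_wordI)
  fix i j assume h: "i < j" "j < length (xs @ ys)" "(xs @ ys)!i" "(xs @ ys)!j"
    and gap: "\<And>k. i < k \<Longrightarrow> k < j \<Longrightarrow> \<not> (xs @ ys)!k"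
  have i: "length xs \<le> i"
  proof (rule ccontr)
    assume "\<not> length xs \<le> i"
    hence "xs ! i" "i < length xs" using h(3) by (auto simp: nth_append)
    thus False using assms(1) by (metis nth_mem)
  qed
  have "(j - length xs) - (i - length xs) - 1 \<in> S"
  proof (rule gap_wordD[OF assms(2)])
    fix k assume "i - length xs < k" "k < j - length xs"
    thus "\<not> ys ! k" using gap[of "k + length xs"] i by (auto simp: nth_append)
  qed (use h i in \<open>auto simp: nth_append\<close>)
  thus "j - i - 1 \<in> S" using i h by simp
qed

lemma gap_word_append_zeros:
  assumes "True \<notin> set ys" "gap_word S xs" shows "gap_word S (xs @ ys)"
proof (rule gap_wordI)
  fix i j assume h: "i < j" "j < length (xs @ ys)" "(xs @ ys)!i" "(xs @ ys)!j"
    and gap: "\<And>k. i < k \<Longrightarrow> k < j \<Longrightarrow> \<not> (xs @ ys)!k"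
  have j: "j < length xs"
  proof (rule ccontr)
    assume "\<not> j < length xs"
    hence "ys ! (j - length xs)" "j - length xs < length ys" using h(2,4) by (auto simp: nth_append)
    thus False using assms(1) by (metis nth_mem)
  qed
  show "j - i - 1 \<in> S"
  proof (rule gap_wordD[OF assms(2)])
    fix k assume "i < k" "k < j"
    thus "\<not> xs ! k" using gap[of k] j by (auto simp: nth_append)
  qed (use h j in \<open>auto simp: nth_append\<close>)
qed

lemma gap_word_join:
  assumes xs: "gap_word S (xs @ [True])" and ys: "gap_word S (True # ys)"
  shows "gap_word S (xs @ True # ys)"
proof (rule gap_wordI)
  fix i j assume h: "i < j" "j < length (xs @ True # ys)" "(xs @ True # ys)!i" "(xs @ True # ys)!j"
    and gap: "\<And>k. i < k \<Longrightarrow> k < j \<Longrightarrow> \<not> (xs @ True # ys)!k"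
  let ?p = "length xs"
  show "j - i - 1 \<in> S"
  proof (cases "j \<le> ?p")
    case True
    show ?thesis
    proof (rule gap_wordD[OF xs])
      fix k assume "i < k" "k < j"
      thus "\<not> (xs @ [True]) ! k" using gap[of k] True by (auto simp: nth_append)
    qed (use h True in \<open>auto simp: nth_append split: if_splits\<close>)
  next
    case False
    have i: "?p \<le> i"
      using gap[of ?p] False by (cases "i < ?p") (auto simp: nth_append)
    have "(j - ?p) - (i - ?p) - 1 \<in> S"
    proof (rule gap_wordD[OF ys])
      fix k assume "i - ?p < k" "k < j - ?p"
      thus "\<not> (True # ys) ! k" using gap[of "k + ?p"] i by (auto simp: nth_append)
    qed (use h i False in \<open>auto simp: nth_append\<close>)
    thus ?thesis using i h by simp
  qed
qed

lemma gap_word_block_iff: "gap_word S (True # replicate n False @ [True]) \<longleftrightarrow> n \<in> S"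
proof
  assume "gap_word S (True # replicate n False @ [True])"
  hence "(n + 1) - 0 - 1 \<in> S"
    by (rule gap_wordD) (auto simp: nth_append nth_Cons')
  thus "n \<in> S" by simp
next
  assume n: "n \<in> S"
  show "gap_word S (True # replicate n False @ [True])"
  proof (rule gap_wordI)
    fix i j assume h: "i < j" "j < length (True # replicate n False @ [True])"
      "(True # replicate n False @ [True])!i" "(True # replicate n False @ [True])!j"
    have one: "(True # replicate n False @ [True]) ! k \<longleftrightarrow> k = 0 \<or> k = n + 1" if "k < n + 2" for k
      using that by (cases k) (auto simp: nth_append)
    have "i = 0 \<or> i = n + 1" "j = 0 \<or> j = n + 1" using h one[of i] one[of j] by auto
    hence "i = 0" "j = n + 1" using h by auto
    thus "j - i - 1 \<in> S" using n by simp
  qed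
qed

lemma split_first_True: "True \<in> set w \<Longrightarrow> \<exists>a w'. w = replicate a False @ True # w'"
proof (induction w)
  case (Cons x w)
  show ?case
  proof (cases x)
    case False
    then obtain a w' where "w = replicate a False @ True # w'" using Cons by auto
    thus ?thesis using False by (auto intro!: exI[of _ "Suc a"])
  qed (auto intro!: exI[of _ 0])
qed simp

lemma split_last_True: "True \<in> set w \<Longrightarrow> \<exists>w' b. w = w' @ True # replicate b False"
proof -
  assume "True \<in> set w"
  then obtain a w' where "rev w = replicate a False @ True # w'" using split_first_True[of "rev w"] by auto
  hence "w = rev w' @ True # replicate a False" by (metis append.assoc append_Cons append_Nil rev.simps(2)
        rev_append rev_replicate rev_rev_ident)
  thus ?thesis by blast
qed

definition block_word :: "nat list \<Rightarrow> bool list" where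
  "block_word ss = True # concat (map (\<lambda>s. replicate s False @ [True]) ss)"

lemma gap_word_block_word: "set ss \<subseteq> S \<Longrightarrow> gap_word S (block_word ss)"
proof (induction ss)
  case Nil thus ?case by (auto simp: block_word_def gap_word_def)
next
  case (Cons s ss)
  have "block_word (s # ss) = (True # replicate s False) @ True # concat (map (\<lambda>s. replicate s False @ [True]) ss)"
    by (simp add: block_word_def)
  moreover have "gap_word S ((True # replicate s False) @ [True])"
    using gap_word_block_iff[of S s] Cons.prems by simp
  moreover have "gap_word S (True # concat (map (\<lambda>s. replicate s False @ [True]) ss))"
    using Cons by (simp add: block_word_def)
  ultimately show ?case using gap_word_join by metis
qed

lemma inj_gap_shift: "inj gap_shift"
proof (rule injI)
  fix S1 S2 assume "gap_shift S1 = gap_shift S2"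
  hence gap_words: "gap_word S1 = gap_word S2" using words_gap_shift by (metis Collect_inj)
  show "S1 = S2"
    using gap_word_block_iff[of S1] gap_word_block_iff[of S2] unfolding gap_words by blast
qed

section \<open>Specification\<close>

text \<open>The zeros at the two ends are padded to gaps in the progression; the remaining length
  X \<ge> 2 D (M + 1) is filled with t = X mod D + D blocks with gap M, the first of them enlarged
  by a multiple of D, which fits because M + 1 = 1 (mod D) gives t (M + 1) = X (mod D).\<close>

lemma gap_word_bridge:
  fixes D M a b :: nat
  assumes D: "1 \<le> D" and DM: "D dvd M" "D \<le> M" and prog: "\<And>j. M + D * j \<in> S"
  shows "\<exists>w. length w = 2 * M + 1 + 2 * D * (M + 1) \<and>
           gap_word S (True # replicate a False @ w @ replicate b False @ [True])"
proof -
  define N where "N = 2 * M + 1 + 2 * D * (M + 1)"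
  obtain m' where m': "M = D * m'" using DM by auto
  define d1 where "d1 = M - a mod D"
  define d2 where "d2 = M - b mod D"
  have "a mod D < D" "b mod D < D" using D by auto
  hence mod_le: "a mod D \<le> M" "b mod D \<le> M" using DM(2) by linarith+
  have g1: "a + d1 = M + D * (a div D)"
    using mod_le(1) minus_mod_eq_mult_div[of a D] mod_less_eq_dividend[of a D] unfolding d1_def by linarith
  have g2: "b + d2 = M + D * (b div D)"
    using mod_le(2) minus_mod_eq_mult_div[of b D] mod_less_eq_dividend[of b D] unfolding d2_def by linarith
  define X where "X = N - 1 - d1 - d2"
  define t where "t = X mod D + D"
  have t: "1 \<le> t" "t \<le> 2 * D" using D by (auto simp: t_def)
  have "X \<ge> 2 * D * (M + 1)" by (simp add: X_def N_def d1_def d2_def)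
  moreover have "t * (M + 1) \<le> 2 * D * (M + 1)" using t(2) by (rule mult_right_mono) simp
  ultimately have tX: "t * (M + 1) \<le> X" by linarith
  have "t * (M + 1) = t * M + X mod D + D" by (simp add: t_def algebra_simps)
  hence "X - t * (M + 1) = D * (X div D) - D - t * M"
    using tX mult_div_mod_eq[of D X] by linarith
  also have "\<dots> = D * (X div D - 1 - t * m')" by (simp add: m' diff_mult_distrib2 mult.left_commute)
  finally obtain j where j: "X - t * (M + 1) = D * j" by blast
  define ms where "ms = (M + D * j) # replicate (t - 1) M"
  define w where "w = replicate d1 False @ True #
                      concat (map (\<lambda>s. replicate s False @ [True]) ms) @ replicate d2 False"
  have "length (concat (map (\<lambda>s. replicate s False @ [True]) ms)) = t * (M + 1) + D * j"
  proof -
    have "length (concat (map (\<lambda>s. replicate s False @ [True]) (replicate k M))) = k * (M + 1)" for k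
      by (induction k) auto
    thus ?thesis using t(1) by (cases t) (auto simp: ms_def algebra_simps)
  qed
  hence "length w = N" using j tX by (simp add: w_def X_def N_def d1_def d2_def)
  moreover have "True # replicate a False @ w @ replicate b False @ [True]
                   = block_word ((a + d1) # ms @ [b + d2])"
    by (simp add: block_word_def w_def add.commute flip: replicate_add)
  moreover have "set ((a + d1) # ms @ [b + d2]) \<subseteq> S"
    using prog[of "a div D"] prog[of "b div D"] prog[of j] prog[of 0] by (auto simp: g1 g2 ms_def)
  ultimately show ?thesis using gap_word_block_word unfolding N_def by metis
qed

lemma has_specification_gap_shift:
  fixes D M :: nat
  assumes "1 \<le> D" "D dvd M" "D \<le> M" "\<And>j. M + D * j \<in> S"
  shows "has_specification (gap_shift S)"
proof -
  define N where "N = 2 * M + 1 + 2 * D * (M + 1)"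
  have bridge: "\<exists>w. length w = N \<and> gap_word S (u @ w @ v)" if u: "gap_word S u" and v: "gap_word S v"
    for u v
  proof (cases "True \<in> set u \<and> True \<in> set v")
    case False
    hence "gap_word S (u @ replicate N False @ v)"
      using gap_word_append_zeros[OF _ u] gap_word_zeros_append[OF _ v, of "u @ replicate N False"]
      by (cases "True \<in> set u") auto
    thus ?thesis by (intro exI[of _ "replicate N False"]) simp
  next
    case True
    then obtain u1 a b v1 where u1: "u = u1 @ True # replicate a False"
      and v1: "v = replicate b False @ True # v1"
      using split_first_True split_last_True by metis
    obtain w where w: "length w = N"
      and gw: "gap_word S ((True # replicate a False @ w @ replicate b False) @ [True])"
      using gap_word_bridge[OF assms, of a b] unfolding N_def by auto
    have "gap_word S (u1 @ [True])" using u u1 gap_word_prefix[of S "u1 @ [True]"] by simp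
    moreover have "gap_word S (True # v1)" using v v1 gap_word_suffix by metis
    ultimately have "gap_word S (u1 @ True # replicate a False @ w @ replicate b False @ True # v1)"
      using gap_word_join[OF gw] gap_word_join by simp
    thus ?thesis using w u1 v1 by auto
  qed
  show ?thesis unfolding has_specification_def words_gap_shift words_n_gap_shift
  proof (intro exI[of _ N] conjI ballI)
    fix u v assume "u \<in> Collect (gap_word S)" "v \<in> Collect (gap_word S)"
    then obtain w where "length w = N" "gap_word S (u @ w @ v)" using bridge by blast
    thus "\<exists>w\<in>{w. length w = N \<and> gap_word S w}. u @ w @ v \<in> Collect (gap_word S)"
      using gap_word_prefix gap_word_suffix by blast
  qed (simp add: N_def)
qed

section \<open>Counting words\<close>

definition framed_words :: "nat set \<Rightarrow> nat \<Rightarrow> bool list set" where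
  "framed_words S m = {w. length w = Suc m \<and> gap_word S w \<and> hd w \<and> last w}"

lemma framed_words_subset_words_n: "framed_words S m \<subseteq> words_n (gap_shift S) (Suc m)"
  by (auto simp: framed_words_def words_n_gap_shift)

lemma finite_framed_words: "finite (framed_words S m)"
  using finite_subset[OF framed_words_subset_words_n finite_words_n] .

lemma card_framed_words_0: "card (framed_words S 0) = 1"
proof -
  have "framed_words S 0 = {[True]}" by (auto simp: framed_words_def gap_word_def length_Suc_conv)
  thus ?thesis by simp
qed

lemma framed_words_eq_UN:
  assumes "0 < m"
  shows "framed_words S m
           = (\<Union>s\<in>S \<inter> {..<m}. (\<lambda>w. True # replicate s False @ w) ` framed_words S (m - s - 1))"
proof (intro set_eqI iffI)
  fix w assume w: "w \<in> framed_words S m"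
  then obtain w2 where w2: "w = True # w2" by (cases w) (auto simp: framed_words_def)
  have "True \<in> set w2" using w w2 assms by (auto simp: framed_words_def) (metis last_in_set)
  then obtain s w' where sw: "w2 = replicate s False @ True # w'" using split_first_True by blast
  have gw: "gap_word S ((True # replicate s False) @ True # w')" using w w2 sw by (simp add: framed_words_def)
  hence "gap_word S (True # replicate s False @ [True])"
    using gap_word_prefix[of S "True # replicate s False @ [True]" w'] by simp
  hence "s \<in> S" by (simp add: gap_word_block_iff)
  moreover have "s < m" "True # w' \<in> framed_words S (m - s - 1)"
    using w w2 sw gap_word_suffix[OF gw] by (auto simp: framed_words_def)
  ultimately show "w \<in> (\<Union>s\<in>S \<inter> {..<m}. (\<lambda>w. True # replicate s False @ w) ` framed_words S (m - s - 1))"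
    using w2 sw by blast
next
  fix w assume "w \<in> (\<Union>s\<in>S \<inter> {..<m}. (\<lambda>w. True # replicate s False @ w) ` framed_words S (m - s - 1))"
  then obtain s w' where s: "s \<in> S" "s < m" and w': "w' \<in> framed_words S (m - s - 1)"
    and w: "w = True # replicate s False @ w'" by blast
  obtain w'' where w'': "w' = True # w''" using w' by (cases w') (auto simp: framed_words_def)
  have "gap_word S ((True # replicate s False) @ True # w'')"
    by (rule gap_word_join) (use gap_word_block_iff[of S s] s w' w'' in \<open>auto simp: framed_words_def\<close>)
  thus "w \<in> framed_words S m" using w' s by (auto simp: framed_words_def w w'')
qed

lemma card_framed_words_rec:
  assumes "0 < m"
  shows "card (framed_words S m) = (\<Sum>s\<in>S \<inter> {..<m}. card (framed_words S (m - s - 1)))"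
proof -
  have disjoint: "(\<lambda>w. True # replicate s False @ w) ` framed_words S (m - s - 1)
                   \<inter> (\<lambda>w. True # replicate s' False @ w) ` framed_words S (m - s' - 1) = {}"
    if "s \<noteq> s'" for s s'
  proof -
    have same_gap: "s1 = s2" if "replicate s1 False @ True # x = replicate s2 False @ True # y"
      for s1 s2 x y
      using that
    proof (induction s1 arbitrary: s2)
      case 0 thus ?case by (cases s2) auto
    next
      case (Suc s1) thus ?case by (cases s2) auto
    qed
    show ?thesis
    proof (rule ccontr)
      assume "\<not> ?thesis"
      then obtain x y where x: "x \<in> framed_words S (m - s - 1)" and y: "y \<in> framed_words S (m - s' - 1)"
        and e: "replicate s False @ x = replicate s' False @ y" by auto
      obtain x' y' where "x = True # x'" "y = True # y'"
        using x y by (cases x; cases y) (auto simp: framed_words_def)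
      thus False using e same_gap[of s x' s' y'] that by simp
    qed
  qed
  have "card (framed_words S m)
         = (\<Sum>s\<in>S \<inter> {..<m}. card ((\<lambda>w. True # replicate s False @ w) ` framed_words S (m - s - 1)))"
    unfolding framed_words_eq_UN[OF assms]
    by (intro card_UN_disjoint ballI impI finite_imageI finite_framed_words disjoint) auto
  also have "\<dots> = (\<Sum>s\<in>S \<inter> {..<m}. card (framed_words S (m - s - 1)))"
    by (rule sum.cong) (auto simp: card_image inj_on_def)
  finally show ?thesis .
qed

lemma card_framed_words_mult_le:
  "card (framed_words S m1) * card (framed_words S m2) \<le> card (framed_words S (m1 + m2))"
proof -
  define f where "f = (\<lambda>(u :: bool list, v :: bool list). butlast u @ v)"
  have u_eq: "u = butlast u @ [True]" if "u \<in> framed_words S m" for u m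
    using that by (auto simp: framed_words_def) (metis append_butlast_last_id list.size(3) nat.distinct(1))
  have v_eq: "\<exists>v'. v = True # v'" if "v \<in> framed_words S m" for v m
    using that by (cases v) (auto simp: framed_words_def)
  have "inj_on f (framed_words S m1 \<times> framed_words S m2)"
  proof (rule inj_onI, clarify)
    fix u v u' v' assume uv: "u \<in> framed_words S m1" "v \<in> framed_words S m2"
      "u' \<in> framed_words S m1" "v' \<in> framed_words S m2" and "f (u, v) = f (u', v')"
    moreover have "length (butlast u) = m1" "length (butlast u') = m1"
      using uv by (auto simp: framed_words_def)
    ultimately have "butlast u = butlast u'" "v = v'" by (auto simp: f_def append_eq_append_conv)
    thus "u = u' \<and> v = v'" using u_eq uv by metis
  qed
  moreover have "f ` (framed_words S m1 \<times> framed_words S m2) \<subseteq> framed_words S (m1 + m2)"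
  proof clarify
    fix u v assume u: "u \<in> framed_words S m1" and v: "v \<in> framed_words S m2"
    obtain v' where v': "v = True # v'" using v_eq[OF v] by blast
    have "gap_word S (butlast u @ True # v')"
      by (rule gap_word_join) (use u v v' u_eq[OF u] in \<open>auto simp: framed_words_def\<close>)
    moreover have "hd (butlast u @ True # v')"
    proof (cases "butlast u")
      case (Cons x xs)
      hence "hd u = x" using u_eq[OF u] by (metis append_Cons list.sel(1))
      thus ?thesis using u Cons by (simp add: framed_words_def)
    qed simp
    ultimately show "f (u, v) \<in> framed_words S (m1 + m2)"
      using u v v' by (auto simp: f_def framed_words_def)
  qed
  ultimately have "card (framed_words S m1 \<times> framed_words S m2) \<le> card (framed_words S (m1 + m2))"
    using card_inj_on_le finite_framed_words by blast
  thus ?thesis by (simp add: card_cartesian_product)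
qed

lemma card_framed_words_power: "card (framed_words S m) ^ k \<le> card (framed_words S (k * m))"
proof (induction k)
  case 0 thus ?case by (simp add: card_framed_words_0)
next
  case (Suc k)
  have "card (framed_words S m) ^ Suc k \<le> card (framed_words S (k * m)) * card (framed_words S m)"
    using Suc by simp
  also have "\<dots> \<le> card (framed_words S (k * m + m))" by (rule card_framed_words_mult_le)
  finally show ?case by (simp add: add.commute)
qed

lemma card_framed_words_le_card_words_n:
  assumes "m < n" shows "card (framed_words S m) \<le> card (words_n (gap_shift S) n)"
proof -
  define f where "f = (\<lambda>w. replicate (n - m - 1) False @ w)"
  have "inj_on f (framed_words S m)" by (auto simp: f_def inj_on_def)
  moreover have "f ` framed_words S m \<subseteq> words_n (gap_shift S) n"
    using assms by (auto simp: f_def words_n_gap_shift framed_words_def intro!: gap_word_zeros_append)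
  ultimately show ?thesis using card_inj_on_le finite_words_n by blast
qed

lemma card_words_n_gap_shift_pos: "0 < card (words_n (gap_shift S) n)"
proof -
  have "replicate n False \<in> words_n (gap_shift S) n"
    using gap_word_append_zeros[of "replicate n False" S "[]"]
    by (auto simp: words_n_gap_shift gap_word_def)
  thus ?thesis using finite_words_n card_gt_0_iff by blast
qed

text \<open>A word with a 1 is a framed word padded by zeros on both sides.\<close>

lemma card_words_n_gap_shift_le_sum:
  "card (words_n (gap_shift S) n) \<le> 1 + (\<Sum>a<n. \<Sum>m<n. card (framed_words S m))"
proof -
  define pad where "pad = (\<lambda>a m w. replicate a False @ w @ replicate (n - a - m - 1) False)"
  define U where "U = (\<Union>a<n. \<Union>m<n. pad a m ` framed_words S m)"
  have "words_n (gap_shift S) n \<subseteq> insert (replicate n False) U"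
  proof
    fix w assume w: "w \<in> words_n (gap_shift S) n"
    show "w \<in> insert (replicate n False) U"
    proof (cases "True \<in> set w")
      case False
      thus ?thesis using w by (auto simp: words_n_gap_shift intro!: replicate_length_same[symmetric])
    next
      case True
      then obtain w0 b where wb: "w = w0 @ True # replicate b False" using split_last_True by blast
      obtain a w1 where aw: "w0 @ [True] = replicate a False @ True # w1"
        using split_first_True[of "w0 @ [True]"] by auto
      have we: "w = replicate a False @ (True # w1) @ replicate b False"
        using wb aw by simp
      hence "gap_word S (True # w1)"
        using w gap_word_prefix gap_word_suffix by (metis mem_Collect_eq words_n_gap_shift)
      moreover have "last (True # w1)" using aw by (metis last_appendR last_snoc list.discI)
      moreover have "length w = n" using w by (simp add: words_n_gap_shift)
      ultimately have "True # w1 \<in> framed_words S (length w1)" "length w1 < n" "a < n"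
        "b = n - a - length w1 - 1"
        using we by (auto simp: framed_words_def)
      thus ?thesis unfolding U_def pad_def using we by blast
    qed
  qed
  hence "card (words_n (gap_shift S) n) \<le> card (insert (replicate n False) U)"
    by (rule card_mono[rotated]) (auto simp: U_def finite_framed_words)
  also have "\<dots> \<le> 1 + card U" by (simp add: card_insert_le_m1 card_insert_if)
  also have "card U \<le> (\<Sum>a<n. \<Sum>m<n. card (pad a m ` framed_words S m))"
    unfolding U_def by (intro card_UN_le order_trans[OF card_UN_le] sum_mono) auto
  also have "\<dots> \<le> (\<Sum>a<n. \<Sum>m<n. card (framed_words S m))"
    by (intro sum_mono card_image_le finite_framed_words)
  finally show ?thesis by simp
qed

section \<open>Weights of sets of gaps\<close>

definition weight_term :: "real \<Rightarrow> nat set \<Rightarrow> nat \<Rightarrow> real" where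
  "weight_term r A n = (if n \<in> A then r ^ Suc n else 0)"

definition weight :: "real \<Rightarrow> nat set \<Rightarrow> real" where
  "weight r A = suminf (weight_term r A)"

lemma summable_weight_term: "0 \<le> r \<Longrightarrow> r < 1 \<Longrightarrow> summable (weight_term r A)"
  by (rule summable_comparison_test'[where g = "\<lambda>n. r * r ^ n"])
     (auto simp: weight_term_def intro: summable_mult summable_geometric)

lemma sums_weight: "0 \<le> r \<Longrightarrow> r < 1 \<Longrightarrow> weight_term r A sums weight r A"
  unfolding weight_def by (rule summable_sums[OF summable_weight_term])

lemma sum_weight_term: "(\<Sum>n<m. weight_term r A n) = (\<Sum>s\<in>A \<inter> {..<m}. r ^ Suc s)"
  by (simp add: weight_term_def sum.If_cases Int_commute)

lemma sum_le_weight: "0 \<le> r \<Longrightarrow> r < 1 \<Longrightarrow> (\<Sum>s\<in>A \<inter> {..<m}. r ^ Suc s) \<le> weight r A"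
  unfolding sum_weight_term[symmetric] weight_def
  by (rule sum_le_suminf[OF summable_weight_term]) (auto simp: weight_term_def)

lemma weight_nonneg: "0 \<le> r \<Longrightarrow> r < 1 \<Longrightarrow> 0 \<le> weight r A"
  unfolding weight_def by (rule suminf_nonneg[OF summable_weight_term]) (auto simp: weight_term_def)

lemma weight_mono: "0 \<le> r \<Longrightarrow> r < 1 \<Longrightarrow> A \<subseteq> B \<Longrightarrow> weight r A \<le> weight r B"
  unfolding weight_def by (intro suminf_le summable_weight_term) (auto simp: weight_term_def)

lemma weight_Un_le: "0 \<le> r \<Longrightarrow> r < 1 \<Longrightarrow> weight r (A \<union> B) \<le> weight r A + weight r B"
  unfolding weight_def
  by (subst suminf_add[OF summable_weight_term summable_weight_term], assumption+)
     (intro suminf_le summable_weight_term summable_add; auto simp: weight_term_def)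

lemma weight_Un_disjoint:
  assumes "0 \<le> r" "r < 1" "A \<inter> B = {}" shows "weight r (A \<union> B) = weight r A + weight r B"
proof -
  have "weight_term r (A \<union> B) = (\<lambda>n. weight_term r A n + weight_term r B n)"
    using assms(3) by (auto simp: weight_term_def fun_eq_iff)
  thus ?thesis unfolding weight_def
    using assms by (simp add: suminf_add[OF summable_weight_term summable_weight_term])
qed

lemma weight_singleton: "weight r {n} = r ^ Suc n"
proof -
  have "weight_term r {n} = (\<lambda>k. if k = n then r ^ Suc k else 0)"
    by (auto simp: weight_term_def fun_eq_iff)
  thus ?thesis unfolding weight_def using sums_single[of n "\<lambda>k. r ^ Suc k"] sums_unique by metis
qed

lemma weight_empty: "weight r {} = 0"
proof -
  have "weight_term r {} = (\<lambda>_. 0)" by (simp add: weight_term_def fun_eq_iff)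
  thus ?thesis by (simp add: weight_def)
qed

lemma weight_atLeast: "0 \<le> r \<Longrightarrow> r < 1 \<Longrightarrow> weight r {n..} = r ^ Suc n / (1 - r)"
proof -
  assume r: "0 \<le> r" "r < 1"
  have "(\<lambda>i. r ^ Suc n * r ^ i) sums (r ^ Suc n * (1 / (1 - r)))"
    using r by (intro sums_mult geometric_sums) auto
  moreover have "(\<lambda>i. weight_term r {n..} (i + n)) = (\<lambda>i. r ^ Suc n * r ^ i)"
    by (auto simp: weight_term_def fun_eq_iff power_add[symmetric] add.commute)
  moreover have "(\<Sum>i<n. weight_term r {n..} i) = 0" by (simp add: weight_term_def)
  ultimately have "weight_term r {n..} sums (r ^ Suc n / (1 - r))"
    using sums_iff_shift[of "weight_term r {n..}" n] by simp
  thus ?thesis unfolding weight_def using sums_unique by metis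
qed

section \<open>Entropy\<close>

lemma card_framed_words_le_power:
  assumes r: "0 < r" "r < 1" and weight: "weight r S \<le> 1"
  shows "real (card (framed_words S m)) \<le> (1 / r) ^ m"
proof (induction m rule: less_induct)
  case (less m)
  show ?case
  proof (cases "m = 0")
    case True thus ?thesis by (simp add: card_framed_words_0)
  next
    case False
    have "real (card (framed_words S m)) = (\<Sum>s\<in>S \<inter> {..<m}. real (card (framed_words S (m - s - 1))))"
      using card_framed_words_rec[of m S] False by simp
    also have "\<dots> \<le> (\<Sum>s\<in>S \<inter> {..<m}. (1 / r) ^ m * r ^ Suc s)"
    proof (rule sum_mono)
      fix s assume s: "s \<in> S \<inter> {..<m}"
      hence "m = (m - s - 1) + Suc s" by auto
      hence "(1 / r) ^ m * r ^ Suc s = (1 / r) ^ (m - s - 1) * ((1 / r) ^ Suc s * r ^ Suc s)"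
        by (metis power_add mult.assoc)
      also have "\<dots> = (1 / r) ^ (m - s - 1)" using r by (simp flip: power_mult_distrib)
      finally show "real (card (framed_words S (m - s - 1))) \<le> (1 / r) ^ m * r ^ Suc s"
        using less s by auto
    qed
    also have "\<dots> = (1 / r) ^ m * (\<Sum>s\<in>S \<inter> {..<m}. r ^ Suc s)" by (simp add: sum_distrib_left)
    also have "\<dots> \<le> (1 / r) ^ m"
      using sum_le_weight[of r S m] weight r by (intro mult_right_le_one_le) (auto intro: sum_nonneg)
    finally show ?thesis .
  qed
qed

lemma weight_one_initial_segment:
  assumes r: "0 < r" "r < 1" "r < z" and weight: "weight r S = 1"
  shows "\<exists>L. 1 \<le> (\<Sum>s\<in>S \<inter> {..<L}. z ^ Suc s)"
proof -
  obtain s0 where s0: "s0 \<in> S" using weight weight_empty by fastforce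
  define \<delta> where "\<delta> = z ^ Suc s0 - r ^ Suc s0"
  have "0 < \<delta>" unfolding \<delta>_def using r by (simp del: power_Suc add: power_strict_mono)
  moreover have "(\<lambda>n. \<Sum>i<n. weight_term r S i) \<longlonglongrightarrow> 1"
    using sums_weight[of r S] r weight by (simp add: sums_def)
  ultimately have "eventually (\<lambda>n. 1 - \<delta> < (\<Sum>s\<in>S \<inter> {..<n}. r ^ Suc s)) sequentially"
    unfolding sum_weight_term by (intro order_tendstoD(1)) auto
  then obtain L0 where L0: "\<And>n. n \<ge> L0 \<Longrightarrow> 1 - \<delta> < (\<Sum>s\<in>S \<inter> {..<n}. r ^ Suc s)"
    unfolding eventually_sequentially by blast
  define L where "L = max L0 (Suc s0)"
  have "\<delta> \<le> (\<Sum>s\<in>S \<inter> {..<L}. z ^ Suc s - r ^ Suc s)"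
    unfolding \<delta>_def using s0 r
    by (intro member_le_sum) (auto simp: L_def simp del: power_Suc intro!: power_mono)
  moreover have "1 - \<delta> < (\<Sum>s\<in>S \<inter> {..<L}. r ^ Suc s)" using L0 by (simp add: L_def)
  ultimately have "1 \<le> (\<Sum>s\<in>S \<inter> {..<L}. z ^ Suc s)" by (simp only: sum_subtractf)
  thus ?thesis by blast
qed

lemma framed_words_generating_sum_rec:
  assumes z: "0 \<le> z" and "L \<le> N"
  shows "1 + (\<Sum>s\<in>S \<inter> {..<L}. z ^ Suc s) * (\<Sum>m\<le>N - L. real (card (framed_words S m)) * z ^ m)
           \<le> (\<Sum>m\<le>N. real (card (framed_words S m)) * z ^ m)"
proof -
  define H where "H = (\<lambda>N. \<Sum>m\<le>N. real (card (framed_words S m)) * z ^ m)"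
  define g where "g = (\<lambda>s m. real (card (framed_words S (m - s - 1))) * z ^ m)"
  define F where "F = S \<inter> {..<L}"
  have "1 + (\<Sum>s\<in>F. z ^ Suc s) * H (N - L) \<le> 1 + (\<Sum>s\<in>F. z ^ Suc s * H (N - s - 1))"
    unfolding sum_distrib_right H_def using z
    by (intro add_left_mono sum_mono mult_left_mono sum_mono2) (auto simp: F_def)
  also have "(\<Sum>s\<in>F. z ^ Suc s * H (N - s - 1)) = (\<Sum>s\<in>F. \<Sum>m\<in>{m. m \<in> {1..N} \<and> s < m}. g s m)"
  proof (rule sum.cong[OF refl])
    fix s assume "s \<in> F"
    hence "{m. m \<in> {1..N} \<and> s < m} = {0 + Suc s..(N - s - 1) + Suc s}" using assms by (auto simp: F_def)
    hence "(\<Sum>m\<in>{m. m \<in> {1..N} \<and> s < m}. g s m) = (\<Sum>i\<in>{0..N - s - 1}. g s (i + Suc s))"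
      by (simp only: sum.shift_bounds_cl_nat_ivl)
    also have "\<dots> = (\<Sum>i\<le>N - s - 1. z ^ Suc s * (real (card (framed_words S i)) * z ^ i))"
      by (intro sum.cong) (auto simp: g_def power_add)
    finally show "z ^ Suc s * H (N - s - 1) = (\<Sum>m\<in>{m. m \<in> {1..N} \<and> s < m}. g s m)"
      by (simp add: H_def sum_distrib_left)
  qed
  also have "\<dots> = (\<Sum>m\<in>{1..N}. \<Sum>s\<in>{s. s \<in> F \<and> s < m}. g s m)"
    by (rule sum.swap_restrict) (auto simp: F_def)
  also have "\<dots> \<le> (\<Sum>m\<in>{1..N}. \<Sum>s\<in>S \<inter> {..<m}. g s m)"
    unfolding g_def using z by (intro sum_mono sum_mono2) (auto simp: F_def)
  also have "1 + \<dots> = H N"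
  proof -
    have "{..N} = insert 0 {1..N}" by auto
    thus ?thesis unfolding H_def g_def
      by (simp add: card_framed_words_0 card_framed_words_rec sum_distrib_right)
  qed
  finally have "1 + (\<Sum>s\<in>F. z ^ Suc s) * H (N - L) \<le> H N" by simp
  thus ?thesis unfolding H_def F_def .
qed

text \<open>If the framed words grew more slowly than \<mu>^m, their generating function at some
  z \<in> (r, 1/\<mu>) would be bounded; but the renewal equation, whose kernel has weight
  \<Sum>s\<in>S. z^(s+1) > 1, forces its partial sums to grow at least linearly.\<close>

lemma card_framed_words_ge_power:
  assumes r: "0 < r" "r < 1" and weight: "weight r S = 1" and \<mu>: "0 < \<mu>" "\<mu> < 1 / r"
  shows "\<exists>m\<ge>1. \<mu> ^ m \<le> real (card (framed_words S m))"
proof (rule ccontr)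
  assume contra: "\<not> ?thesis"
  have bound: "real (card (framed_words S m)) \<le> \<mu> ^ m" for m
  proof (cases "m = 0")
    case False
    hence "1 \<le> m" by simp
    hence "real (card (framed_words S m)) < \<mu> ^ m" using contra by (meson not_le)
    thus ?thesis by simp
  qed (simp add: card_framed_words_0)
  define z where "z = (r + 1 / \<mu>) / 2"
  have "r < 1 / \<mu>" using \<mu> r by (simp add: field_simps)
  hence "r < z" "\<mu> * z < 1" using \<mu> by (simp_all add: z_def field_simps)
  hence z: "r < z" "0 < z" "\<mu> * z < 1" using r by auto
  obtain L where L: "1 \<le> (\<Sum>s\<in>S \<inter> {..<L}. z ^ Suc s)"
    using weight_one_initial_segment[OF r z(1) weight] by blast
  define H where "H = (\<lambda>N. \<Sum>m\<le>N. real (card (framed_words S m)) * z ^ m)"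
  have H_nonneg: "0 \<le> H N" for N unfolding H_def using z by (intro sum_nonneg) auto
  have H_bounded: "H N \<le> 1 / (1 - \<mu> * z)" for N
  proof -
    have "H N \<le> (\<Sum>m\<le>N. (\<mu> * z) ^ m)"
      unfolding H_def power_mult_distrib using bound z by (intro sum_mono mult_right_mono) auto
    also have "\<dots> \<le> (\<Sum>m. (\<mu> * z) ^ m)"
      using z \<mu> by (intro sum_le_suminf summable_geometric) auto
    also have "\<dots> = 1 / (1 - \<mu> * z)" using z \<mu> by (subst suminf_geometric) auto
    finally show ?thesis .
  qed
  have H_linear: "real k \<le> H (k * L)" for k
  proof (induction k)
    case (Suc k)
    have "Suc k * L - L = k * L" by simp
    hence "1 + (\<Sum>s\<in>S \<inter> {..<L}. z ^ Suc s) * H (k * L) \<le> H (Suc k * L)"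
      using framed_words_generating_sum_rec[of z L "Suc k * L" S] z unfolding H_def by simp
    moreover have "1 * H (k * L) \<le> (\<Sum>s\<in>S \<inter> {..<L}. z ^ Suc s) * H (k * L)"
      using L H_nonneg by (rule mult_right_mono)
    ultimately show ?case using Suc.IH by simp
  qed (simp add: H_nonneg)
  obtain k :: nat where "1 / (1 - \<mu> * z) < k" using reals_Archimedean2 by blast
  thus False using H_linear[of k] H_bounded[of "k * L"] by simp
qed

lemma card_words_n_gap_shift_le_power:
  assumes r: "0 < r" "r < 1" and weight: "weight r S \<le> 1" and n: "1 \<le> n"
  shows "real (card (words_n (gap_shift S) n)) \<le> 2 * real n ^ 2 * (1 / r) ^ n"
proof -
  have framed: "real (card (framed_words S m)) \<le> (1 / r) ^ n" if "m < n" for m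
  proof -
    have "(1 / r) ^ m \<le> (1 / r) ^ n" using that r by (intro power_increasing) auto
    thus ?thesis using card_framed_words_le_power[OF r weight, of m] by linarith
  qed
  have "real (card (words_n (gap_shift S) n)) \<le> real (1 + (\<Sum>a<n. \<Sum>m<n. card (framed_words S m)))"
    using card_words_n_gap_shift_le_sum[of S n] by (simp only: of_nat_le_iff)
  also have "\<dots> = 1 + (\<Sum>a<n. \<Sum>m<n. real (card (framed_words S m)))"
    by (simp only: of_nat_add of_nat_sum of_nat_1)
  also have "\<dots> \<le> 1 + (\<Sum>a<n. \<Sum>m<n. (1 / r) ^ n)"
    using framed by (intro add_left_mono sum_mono) auto
  also have "\<dots> = 1 + real n * real n * (1 / r) ^ n" by simp
  also have "\<dots> \<le> 2 * real n ^ 2 * (1 / r) ^ n"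
  proof -
    have "1 * 1 \<le> real n * real n" using n by (intro mult_mono) auto
    moreover have "1 \<le> (1 / r) ^ n" using r by (simp add: one_le_power)
    ultimately have "1 * 1 \<le> real n * real n * (1 / r) ^ n" by (intro mult_mono) auto
    thus ?thesis by (simp add: power2_eq_square)
  qed
  finally show ?thesis .
qed

lemma card_words_n_gap_shift_ge_power:
  assumes \<mu>: "1 \<le> \<mu>" and m: "1 \<le> m" "\<mu> ^ m \<le> real (card (framed_words S m))" and "m < n"
  shows "\<mu> ^ (n - m) \<le> real (card (words_n (gap_shift S) n))"
proof -
  define k where "k = (n - 1) div m"
  have "k * m \<le> n - 1" unfolding k_def by (rule div_times_less_eq_dividend)
  hence km: "k * m < n" using \<open>m < n\<close> by linarith
  have "n - 1 < k * m + m" using m(1) mod_less_divisor[of m "n - 1"] div_mult_mod_eq[of "n - 1" m]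
    unfolding k_def by linarith
  hence "\<mu> ^ (n - m) \<le> \<mu> ^ (k * m)" using \<mu> by (intro power_increasing) auto
  also have "\<dots> = (\<mu> ^ m) ^ k" by (metis power_mult mult.commute)
  also have "\<dots> \<le> real (card (framed_words S m)) ^ k" using m \<mu> by (intro power_mono) auto
  also have "\<dots> \<le> real (card (framed_words S (k * m)))"
    using card_framed_words_power[of S m k] by (simp flip: of_nat_power)
  also have "\<dots> \<le> real (card (words_n (gap_shift S) n))"
    using card_framed_words_le_card_words_n[OF km] by simp
  finally show ?thesis .
qed

lemma entropy_rate_upper:
  assumes r: "0 < r" "r < 1" and weight: "weight r S \<le> 1" and n: "1 \<le> n"
  shows "log 2 (real (card (words_n (gap_shift S) n))) / real n
           \<le> 1 / real n + (2 / ln 2) * (ln (real n) / real n) - log 2 r"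
proof -
  have "log 2 (real (card (words_n (gap_shift S) n))) \<le> log 2 (2 * real n ^ 2 * (1 / r) ^ n)"
    using card_words_n_gap_shift_le_power[OF r weight n] card_words_n_gap_shift_pos[of S n] n r
    by (subst log_le_cancel_iff) auto
  also have "\<dots> = 1 + 2 * log 2 (real n) - real n * log 2 r"
    using n r by (simp add: log_mult log_nat_power log_divide)
  finally show ?thesis using n by (simp add: log_def field_simps)
qed

lemma entropy_rate_lower:
  assumes e: "0 \<le> e" and m: "1 \<le> m" "(2 powr e) ^ m \<le> real (card (framed_words S m))" and n: "m < n"
  shows "e - real m * e / real n \<le> log 2 (real (card (words_n (gap_shift S) n))) / real n"
proof -
  have "(2 powr e) ^ (n - m) \<le> real (card (words_n (gap_shift S) n))"
    using card_words_n_gap_shift_ge_power[OF _ m n] ge_one_powr_ge_zero[of 2 e] e by simp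
  hence "log 2 ((2 powr e) ^ (n - m)) \<le> log 2 (real (card (words_n (gap_shift S) n)))"
    using card_words_n_gap_shift_pos[of S n] by (subst log_le_cancel_iff) auto
  hence "(real n - real m) * e \<le> log 2 (real (card (words_n (gap_shift S) n)))"
    using n by (simp add: log_nat_power of_nat_diff)
  hence "(real n - real m) * e / real n \<le> log 2 (real (card (words_n (gap_shift S) n))) / real n"
    by (rule divide_right_mono) simp
  moreover have "(real n - real m) * e / real n = e - real m * e / real n"
    using n by (simp add: field_simps)
  ultimately show ?thesis by simp
qed

lemma entropy_gap_shift:
  assumes r: "0 < r" "r < 1" and weight: "weight r S = 1"
  shows "entropy (gap_shift S) = - log 2 r"
proof -
  define f where "f = (\<lambda>n. log 2 (real (card (words_n (gap_shift S) n))) / real n)"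
  have weight_le: "weight r S \<le> 1" using weight by simp
  have above: "eventually (\<lambda>n. f n < a) sequentially" if "- log 2 r < a" for a
  proof -
    have "(\<lambda>n. 1 / real n + (2 / ln 2) * (ln (real n) / real n) - log 2 r)
            \<longlonglongrightarrow> 0 + (2 / ln 2) * 0 - log 2 r"
      by (intro tendsto_diff tendsto_add tendsto_mult tendsto_const lim_1_over_n lim_ln_over_n)
    hence "eventually (\<lambda>n. 1 / real n + (2 / ln 2) * (ln (real n) / real n) - log 2 r < a) sequentially"
      using that by (intro order_tendstoD(2)) auto
    with eventually_ge_at_top[of 1] show ?thesis
      by eventually_elim (use entropy_rate_upper[OF r weight_le] in \<open>auto simp: f_def intro: le_less_trans\<close>)
  qed
  have below: "eventually (\<lambda>n. a < f n) sequentially" if "a < - log 2 r" for a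
  proof (cases "a < 0")
    case True
    hence "a < f n" for n using card_words_n_gap_shift_pos[of S n] by (simp add: f_def less_le_trans)
    thus ?thesis by simp
  next
    case False
    define e where "e = (a - log 2 r) / 2"
    have e: "0 < e" "a < e" "e < - log 2 r" using False that by (auto simp: e_def)
    have "2 powr e < 2 powr (- log 2 r)" using e(3) by (rule powr_less_mono) simp
    hence \<mu>: "0 < 2 powr e" "2 powr e < 1 / r" using r by (simp_all add: powr_minus_divide)
    obtain m where m: "1 \<le> m" "(2 powr e) ^ m \<le> real (card (framed_words S m))"
      using card_framed_words_ge_power[OF r weight \<mu>] by blast
    have "(\<lambda>n. e - real m * e / real n) \<longlonglongrightarrow> e - 0"
      by (intro tendsto_diff tendsto_const lim_const_over_n)
    hence "eventually (\<lambda>n. a < e - real m * e / real n) sequentially"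
      using e by (intro order_tendstoD(1)) auto
    with eventually_gt_at_top[of m] show ?thesis
      by eventually_elim (use entropy_rate_lower[OF _ m] e in \<open>auto simp: f_def intro: less_le_trans\<close>)
  qed
  have "f \<longlonglongrightarrow> - log 2 r" by (rule order_tendstoI) (use above below in auto)
  thus ?thesis unfolding entropy_def f_def by (rule limI)
qed

section \<open>Subsets of prescribed weight\<close>

lemma weight_Int_atLeast:
  assumes "0 \<le> r" "r < 1"
  shows "weight r (P \<inter> {n..}) = weight_term r P n + weight r (P \<inter> {Suc n..})"
proof -
  have "weight r (P \<inter> {n..}) = weight r ((P \<inter> {n}) \<union> (P \<inter> {Suc n..}))"
    by (rule arg_cong[where f = "weight r"]) auto
  also have "\<dots> = weight r (P \<inter> {n}) + weight r (P \<inter> {Suc n..})"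
    using assms by (intro weight_Un_disjoint) auto
  also have "weight r (P \<inter> {n}) = weight_term r P n"
  proof (cases "n \<in> P")
    case True
    hence "P \<inter> {n} = {n}" by auto
    thus ?thesis using True by (simp add: weight_singleton weight_term_def)
  next
    case False
    hence "P \<inter> {n} = {}" by auto
    thus ?thesis using False by (simp add: weight_empty weight_term_def)
  qed
  finally show ?thesis .
qed

primrec greedy_sum :: "real \<Rightarrow> nat set \<Rightarrow> real \<Rightarrow> nat \<Rightarrow> real" where
  "greedy_sum r P t 0 = 0"
| "greedy_sum r P t (Suc n) = greedy_sum r P t n +
     (if n \<in> P \<and> greedy_sum r P t n + r ^ Suc n \<le> t then r ^ Suc n else 0)"

lemma greedy_sum_eq_sum:
  "greedy_sum r P t n = (\<Sum>k<n. weight_term r {p \<in> P. greedy_sum r P t p + r ^ Suc p \<le> t} k)"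
  by (induction n) (auto simp: weight_term_def)

text \<open>Whenever the greedy algorithm has to skip an element p, the remaining gap is below
  r^(p+1), which the tail hypothesis says the later elements can still fill.\<close>

lemma greedy_sum_remainder:
  assumes r: "0 < r" "r < 1" and t: "0 \<le> t" "t \<le> weight r P"
    and tail: "\<And>p. p \<in> P \<Longrightarrow> r ^ Suc p \<le> weight r (P \<inter> {Suc p..})"
  shows "0 \<le> t - greedy_sum r P t n \<and> t - greedy_sum r P t n \<le> weight r (P \<inter> {n..})"
proof (induction n)
  case 0 thus ?case using t by simp
next
  case (Suc n)
  show ?case
  proof (cases "n \<in> P \<and> greedy_sum r P t n + r ^ Suc n \<le> t")
    case True
    thus ?thesis using Suc weight_Int_atLeast[of r P n] r by (simp add: weight_term_def)
  next
    case False
    hence sum_Suc: "greedy_sum r P t (Suc n) = greedy_sum r P t n" by auto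
    show ?thesis
    proof (cases "n \<in> P")
      case True
      hence "t - greedy_sum r P t n < r ^ Suc n" using False by auto
      also have "\<dots> \<le> weight r (P \<inter> {Suc n..})" using tail[OF True] .
      finally show ?thesis using sum_Suc Suc by simp
    next
      case False
      thus ?thesis using sum_Suc Suc weight_Int_atLeast[of r P n] r by (simp add: weight_term_def)
    qed
  qed
qed

lemma exists_subset_weight_eq:
  assumes r: "0 < r" "r < 1" and t: "0 \<le> t" "t \<le> weight r P"
    and tail: "\<And>p. p \<in> P \<Longrightarrow> r ^ Suc p \<le> weight r (P \<inter> {Suc p..})"
  shows "\<exists>B\<subseteq>P. weight r B = t"
proof -
  define B where "B = {p \<in> P. greedy_sum r P t p + r ^ Suc p \<le> t}"
  note remainder = greedy_sum_remainder[OF r t tail]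
  have upper: "t - greedy_sum r P t n \<le> r * r ^ n / (1 - r)" for n
    using remainder[of n] weight_mono[of r "P \<inter> {n..}" "{n..}"] weight_atLeast[of r n] r by simp
  have "(\<lambda>n. r * r ^ n / (1 - r)) \<longlonglongrightarrow> r * 0 / (1 - r)"
    using r by (intro tendsto_divide tendsto_mult tendsto_const LIMSEQ_power_zero) auto
  hence "(\<lambda>n. r * r ^ n / (1 - r)) \<longlonglongrightarrow> 0" by simp
  hence "(\<lambda>n. t - greedy_sum r P t n) \<longlonglongrightarrow> 0"
  proof (rule tendsto_sandwich[OF _ _ tendsto_const, rotated 2])
    show "\<forall>\<^sub>F n in sequentially. 0 \<le> t - greedy_sum r P t n" using remainder by simp
    show "\<forall>\<^sub>F n in sequentially. t - greedy_sum r P t n \<le> r * r ^ n / (1 - r)" using upper by simp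
  qed
  hence "(\<lambda>n. t - (t - greedy_sum r P t n)) \<longlonglongrightarrow> t - 0" by (intro tendsto_diff tendsto_const)
  moreover have "(\<Sum>k<n. weight_term r B k) = greedy_sum r P t n" for n
    unfolding B_def by (rule greedy_sum_eq_sum[symmetric])
  ultimately have "weight_term r B sums t" by (simp add: sums_def)
  hence "weight r B = t" unfolding weight_def by (rule sums_unique[symmetric])
  moreover have "B \<subseteq> P" by (auto simp: B_def)
  ultimately show ?thesis by blast
qed

lemma weight_multiples_tail_le:
  fixes K p :: nat
  assumes r: "0 \<le> r" "r < 1" and K: "1 \<le> K"
  shows "weight r ({n. K dvd n} \<inter> {Suc p..}) \<le> r ^ Suc (Suc p) + r ^ Suc (Suc p + K) / (1 - r)"
proof -
  define next_mult where "next_mult = K * (p div K + 1)"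
  have p: "K * (p div K) + p mod K = p" "p mod K < K" using K by auto
  have "{n. K dvd n} \<inter> {Suc p..} \<subseteq> {next_mult} \<union> {Suc p + K..}"
  proof
    fix n assume n: "n \<in> {n. K dvd n} \<inter> {Suc p..}"
    show "n \<in> {next_mult} \<union> {Suc p + K..}"
    proof (cases "Suc p + K \<le> n")
      case False
      obtain q where q: "n = K * q" using n by auto
      have "Suc p \<le> K * q" using n q by simp
      hence "K * (p div K) < K * q" using p by linarith
      hence "p div K < q" by simp
      moreover have "K * q < K * (p div K) + 2 * K" using False p q by linarith
      hence "K * q < K * (p div K + 2)" by (simp add: distrib_left)
      hence "q < p div K + 2" by (simp only: mult_less_cancel1)
      ultimately have "q = p div K + 1" by simp
      thus ?thesis by (simp add: q next_mult_def)
    qed simp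
  qed
  hence "weight r ({n. K dvd n} \<inter> {Suc p..}) \<le> weight r ({next_mult} \<union> {Suc p + K..})"
    using r by (rule weight_mono[rotated 2])
  also have "\<dots> \<le> weight r {next_mult} + weight r {Suc p + K..}" by (rule weight_Un_le[OF r])
  also have "\<dots> = r ^ Suc next_mult + r ^ Suc (Suc p + K) / (1 - r)"
    by (simp only: weight_singleton weight_atLeast[OF r])
  also have "Suc p \<le> K * (p div K) + K" using p by linarith
  hence "r ^ Suc next_mult \<le> r ^ Suc (Suc p)"
    using r by (intro power_decreasing) (auto simp: next_mult_def distrib_left)
  finally show ?thesis by simp
qed

lemma weight_tail_non_multiples:
  fixes K M p :: nat
  assumes r: "0 < r" "r < 1" and K: "1 \<le> K" "r ^ (K + 1) \<le> r\<^sup>2 + r - 1"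
  shows "r ^ Suc p \<le> weight r (- {n. M \<le> n \<and> K dvd n} \<inter> {Suc p..})"
proof -
  define R where "R = {n. M \<le> n \<and> K dvd n}"
  define u where "u = r ^ Suc p"
  have u: "0 < u" using r by (simp add: u_def)
  have "u * r / (1 - r) = weight r {Suc p..}"
    using weight_atLeast[of r "Suc p"] r by (simp add: u_def mult.commute)
  also have "\<dots> = weight r ((- R \<inter> {Suc p..}) \<union> (R \<inter> {Suc p..}))"
    by (rule arg_cong[where f = "weight r"]) auto
  also have "\<dots> = weight r (- R \<inter> {Suc p..}) + weight r (R \<inter> {Suc p..})"
    using r by (intro weight_Un_disjoint) auto
  finally have "u * r / (1 - r) = weight r (- R \<inter> {Suc p..}) + weight r (R \<inter> {Suc p..})" .
  moreover have "weight r (R \<inter> {Suc p..}) \<le> weight r ({n. K dvd n} \<inter> {Suc p..})"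
    using r by (intro weight_mono) (auto simp: R_def)
  moreover have "weight r ({n. K dvd n} \<inter> {Suc p..}) \<le> r ^ Suc (Suc p) + r ^ Suc (Suc p + K) / (1 - r)"
    using r K by (intro weight_multiples_tail_le) auto
  moreover have "r ^ Suc (Suc p) + r ^ Suc (Suc p + K) / (1 - r) = u * r + u * r ^ (K + 1) / (1 - r)"
    by (simp add: u_def power_add mult_ac)
  moreover have "u * r / (1 - r) - u * r - u * r ^ (K + 1) / (1 - r) = u * (r\<^sup>2 - r ^ (K + 1)) / (1 - r)"
  proof -
    have "u * r / (1 - r) - u * r - u * r ^ (K + 1) / (1 - r)
            = (u * r - u * r * (1 - r) - u * r ^ (K + 1)) / (1 - r)"
      using r by (simp add: diff_divide_distrib)
    also have "u * r - u * r * (1 - r) - u * r ^ (K + 1) = u * (r\<^sup>2 - r ^ (K + 1))"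
      by (simp add: algebra_simps power2_eq_square)
    finally show ?thesis .
  qed
  moreover have "u \<le> u * (r\<^sup>2 - r ^ (K + 1)) / (1 - r)"
    using K(2) u r by (simp add: pos_le_divide_eq)
  ultimately have "u \<le> weight r (- R \<inter> {Suc p..})" by linarith
  thus ?thesis unfolding R_def u_def .
qed

text \<open>The non-multiples are heavy enough, in total and in every tail, for the greedy choice.\<close>

lemma weight_one_extension:
  fixes K M :: nat
  assumes r: "0 < r" "r < 1" and K: "1 \<le> K" "r ^ (K + 1) \<le> r\<^sup>2 + r - 1"
    and M: "r ^ Suc M \<le> 1 - r" "r ^ Suc M \<le> 2 * r - 1"
    and C: "C \<subseteq> {n. M \<le> n \<and> K dvd n}"
  shows "\<exists>S. weight r S = 1 \<and> S \<inter> {n. M \<le> n \<and> K dvd n} = C"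
proof -
  define R where "R = {n. M \<le> n \<and> K dvd n}"
  have r0: "0 \<le> r" using r by simp
  have weight_R: "weight r R \<le> r ^ Suc M / (1 - r)"
    using weight_mono[OF r0 r(2), of R "{M..}"] weight_atLeast[OF r0 r(2)] by (auto simp: R_def)
  have "weight r C \<le> weight r R" using C by (intro weight_mono[OF r0 r(2)]) (simp add: R_def)
  moreover have "r ^ Suc M / (1 - r) \<le> 1" using M(1) r by (simp add: pos_divide_le_eq)
  ultimately have C_le: "weight r C \<le> 1" using weight_R by linarith
  have "weight r UNIV = weight r (- R) + weight r R"
    using weight_Un_disjoint[OF r0 r(2), of "- R" R] by (simp add: Un_commute)
  moreover have "weight r UNIV = r / (1 - r)" using weight_atLeast[OF r0 r(2), of 0] by simp
  moreover have "1 \<le> (r - r ^ Suc M) / (1 - r)" using M(2) r by (simp add: pos_le_divide_eq)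
  ultimately have "1 \<le> weight r (- R)" using weight_R by (simp add: diff_divide_distrib)
  moreover have "0 \<le> weight r C" by (rule weight_nonneg[OF r0 r(2)])
  ultimately obtain B where B: "B \<subseteq> - R" "weight r B = 1 - weight r C"
    using exists_subset_weight_eq[OF r, of "1 - weight r C" "- R"] C_le
      weight_tail_non_multiples[OF r K] by (auto simp: R_def)
  have "weight r (C \<union> B) = 1"
    using B C by (subst weight_Un_disjoint[OF r0 r(2)]) (auto simp: R_def)
  moreover have "(C \<union> B) \<inter> R = C" using B C by (auto simp: R_def)
  ultimately show ?thesis unfolding R_def by blast
qed

section \<open>A continuum of gap sets\<close>

lemma weight_parameters_exist:
  fixes r :: real
  assumes r: "0 < r" "r < 1" "1 < r\<^sup>2 + r"
  shows "\<exists>K N. 1 \<le> K \<and> r ^ (K + 1) \<le> r\<^sup>2 + r - 1 \<and>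
           r ^ Suc (2 * K * Suc N) \<le> 1 - r \<and> r ^ Suc (2 * K * Suc N) \<le> 2 * r - 1"
proof -
  have "r * r < r * 1" using r by (intro mult_strict_left_mono) auto
  hence "0 < 2 * r - 1" using r(3) by (simp add: power2_eq_square)
  have small: "\<exists>N. \<forall>n\<ge>N. r ^ n < c" if "0 < c" for c
    using order_tendstoD(2)[OF LIMSEQ_power_zero that] r unfolding eventually_sequentially by auto
  obtain N0 where N0: "\<And>n. N0 \<le> n \<Longrightarrow> r ^ n < r\<^sup>2 + r - 1" using small[of "r\<^sup>2 + r - 1"] r(3) by auto
  obtain N where N: "\<And>n. N \<le> n \<Longrightarrow> r ^ n < min (1 - r) (2 * r - 1)"
    using small[of "min (1 - r) (2 * r - 1)"] r \<open>0 < 2 * r - 1\<close> by auto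
  have "N \<le> Suc (2 * Suc N0 * Suc N)" using mult_le_mono1[of 1 "2 * Suc N0" "Suc N"] by simp
  thus ?thesis using N0[of "Suc N0 + 1"] N[of "Suc (2 * Suc N0 * Suc N)"]
    by (intro exI[of _ "Suc N0"] exI[of _ N]) auto
qed

text \<open>An arbitrary A is encoded in the odd multiples of K beyond M, while all even multiples
  stay in the set to provide an arithmetic progression.\<close>

lemma exists_inj_weight_one_sets:
  assumes r: "0 < r" "r < 1" "1 < r\<^sup>2 + r"
  shows "\<exists>D M (F :: nat set \<Rightarrow> nat set). 1 \<le> D \<and> D dvd M \<and> D \<le> M \<and> inj F \<and>
           (\<forall>A j. M + D * j \<in> F A) \<and> (\<forall>A. weight r (F A) = 1)"
proof -
  obtain K N where K: "1 \<le> K" "r ^ (K + 1) \<le> r\<^sup>2 + r - 1"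
    and N: "r ^ Suc (2 * K * Suc N) \<le> 1 - r" "r ^ Suc (2 * K * Suc N) \<le> 2 * r - 1"
    using weight_parameters_exist[OF r] by blast
  define M where "M = 2 * K * Suc N"
  define R where "R = {n. M \<le> n \<and> K dvd n}"
  define E where "E = {n. M \<le> n \<and> 2 * K dvd n}"
  define odd_mult where "odd_mult = (\<lambda>j. M + K + 2 * K * j)"
  have "E \<union> odd_mult ` A \<subseteq> R" for A
    by (auto simp: E_def R_def odd_mult_def M_def intro: dvd_add dvd_mult2)
  hence "\<forall>A. \<exists>S. weight r S = 1 \<and> S \<inter> R = E \<union> odd_mult ` A"
    using weight_one_extension[OF r(1,2) K N[folded M_def]] by (simp add: R_def)
  then obtain F where F: "\<And>A. weight r (F A) = 1" "\<And>A. F A \<inter> R = E \<union> odd_mult ` A" by metis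
  have odd_mult_in_R: "odd_mult j \<in> R" for j
    by (auto simp: R_def odd_mult_def M_def intro: dvd_add dvd_mult2)
  have not_E: "odd_mult j \<notin> E" for j
  proof
    assume "odd_mult j \<in> E"
    moreover have "odd_mult j = 2 * K * (Suc N + j) + K" by (simp add: odd_mult_def M_def algebra_simps)
    ultimately have "2 * K dvd 2 * K * (Suc N + j) + K" by (simp add: E_def)
    hence "2 * K dvd K" using dvd_add_right_iff[of "2 * K" "2 * K * (Suc N + j)" K] by auto
    hence "2 * K \<le> K" using K(1) by (intro dvd_imp_le) auto
    thus False using K(1) by simp
  qed
  have "inj odd_mult" using K(1) by (auto simp: inj_def odd_mult_def)
  have mem: "odd_mult j \<in> F A \<longleftrightarrow> j \<in> A" for A j
  proof -
    have "odd_mult j \<in> F A \<longleftrightarrow> odd_mult j \<in> F A \<inter> R" using odd_mult_in_R by blast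
    also have "\<dots> \<longleftrightarrow> odd_mult j \<in> odd_mult ` A" using F(2) not_E by auto
    also have "\<dots> \<longleftrightarrow> j \<in> A" using \<open>inj odd_mult\<close> by (simp add: inj_image_mem_iff)
    finally show ?thesis .
  qed
  have "inj F"
  proof (rule injI)
    fix A1 A2 assume "F A1 = F A2"
    thus "A1 = A2" using mem[of _ A1] mem[of _ A2] by (intro set_eqI) simp
  qed
  moreover have "M + 2 * K * j \<in> F A" for A j
  proof -
    have "M + 2 * K * j = 2 * K * (Suc N + j)" by (simp add: M_def algebra_simps)
    hence "M + 2 * K * j \<in> E" by (simp add: E_def)
    hence "M + 2 * K * j \<in> F A \<inter> R" unfolding F(2) by blast
    thus ?thesis by blast
  qed
  moreover have "1 \<le> 2 * K" "2 * K dvd M" "2 * K \<le> M" using K(1) by (simp_all add: M_def)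
  ultimately show ?thesis using F(1) by blast
qed

lemma one_lt_square_plus_inverse_golden_ratio:
  fixes y :: real
  assumes "1 < y" "y < (1 + sqrt 5) / 2"
  shows "1 < (1 / y)\<^sup>2 + 1 / y"
proof -
  have "(2 * y - 1)\<^sup>2 < (sqrt 5)\<^sup>2" using assms by (intro power_strict_mono) auto
  hence "y * y < 1 + y" by (simp add: power2_eq_square algebra_simps)
  thus ?thesis using assms by (simp add: field_simps power2_eq_square)
qed

theorem theorem4p3:
  fixes q :: real
  assumes "0 < q" and "q < log 2 ((1 + sqrt 5) / 2)"
  shows "\<exists>\<X> :: (int \<Rightarrow> bool) set set.
           \<X> \<approx> (UNIV :: real set) \<and>
           (\<forall>X\<in>\<X>. (\<exists>S. S \<noteq> {} \<and> X = gap_shift S) \<and>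
                    has_specification X \<and> entropy X = q)"
proof -
  define y where "y = 2 powr q"
  have "2 powr 0 < y" unfolding y_def using assms(1) by (rule powr_less_mono) simp
  moreover have "y < 2 powr log 2 ((1 + sqrt 5) / 2)"
    unfolding y_def using assms(2) by (rule powr_less_mono) simp
  ultimately have y: "1 < y" "y < (1 + sqrt 5) / 2" by (simp_all add: add_pos_nonneg)
  define r where "r = 1 / y"
  have r: "0 < r" "r < 1" "1 < r\<^sup>2 + r" "- log 2 r = q"
    using y one_lt_square_plus_inverse_golden_ratio[OF y] by (simp_all add: r_def y_def log_divide)
  obtain D M and F :: "nat set \<Rightarrow> nat set" where D: "1 \<le> D" "D dvd M" "D \<le> M"
    and F: "inj F" "\<And>A j. M + D * j \<in> F A" "\<And>A. weight r (F A) = 1"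
    using exists_inj_weight_one_sets[OF r(1-3)] by blast
  have "range (gap_shift \<circ> F) \<approx> (UNIV :: nat set set)"
    using inj_compose[OF inj_gap_shift F(1)] by (rule inj_on_image_eqpoll_self)
  hence "range (gap_shift \<circ> F) \<approx> (UNIV :: real set)"
    using nat_sets_eqpoll_reals by (rule eqpoll_trans)
  moreover have "F A \<noteq> {} \<and> has_specification (gap_shift (F A)) \<and> entropy (gap_shift (F A)) = q" for A
    using F(2)[where A = A and j = 0] has_specification_gap_shift[OF D F(2)]
      entropy_gap_shift[OF r(1,2) F(3)] r(4) by blast
  ultimately show ?thesis by (intro exI[of _ "range (gap_shift \<circ> F)"]) auto
qed

end
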